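(* Let $n\ge2$, $F(a)=\prod_{i=1}^n(a-a_i)$ with distinct real $a_i$, and consider, for $0<a<a_1$, the superintegrable systems (integrals of degree $2n+1$) of the construction below with $\nu_n=1$: $\mathcal{I}_{-+}$: $x(a)=\frac a2-\frac1{\sqrt{a_1-a}}-\sum_{i=2}^n\frac{\xi_i}{\sqrt{a_i-a}}$, so that with $u=\sqrt a\in(0,\sqrt{a_1})$, $g=(\mu^2du^2+dy^2)/u^2$, $\mu=1-\frac1{(a_1-u^2)^{3/2}}-\sum_{i=2}^n\frac{\xi_i}{(a_i-u^2)^{3/2}}$; $\mathcal{I}_{--}$: $x(a)=\frac a2+\frac1{\sqrt{a_1-a}}+\sum_{i=2}^n\frac{\xi_i}{\sqrt{a_i-a}}$, so that $\mu=1+\frac1{(a_1-u^2)^{3/2}}+\sum_{i=2}^n\frac{\xi_i}{(a_i-u^2)^{3/2}}$. These systems (generalizing the cubic cases $\mathcal{I}_{-\pm}$ with $F=a-a_1$) are globally defined on $M\cong\mathbb{H}^2$ under the restrictions $\mathcal{I}_{-+}$: $0<a_1<1$, $a_i>1$ ($i\ge2$), $\xi_i>0$, and $\frac1{|a_1|^{3/2}}+\sum_{i=2}^n\frac{\xi_i}{|a_i|^{3/2}}>1$; $\mathcal{I}_{--}$: $0<a_1<1$, $a_i>1$ ($i\ge2$), $\xi_i>0$.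
   Context: Construction (odd degree $2n+1$): $F=\sum_kA_ka^k=\prod_i(a-a_i)$, signs $\epsilon_i$ (here all $\epsilon_i=-1$), $\Delta_i=\epsilon_i(a-a_i)$, $x=\frac{\nu_n}2a+\sum_i\xi'_i\Delta_i^{-1/2}$ (coefficients $\xi'_i$ read off from the displayed $x$); $H=\Pi^2+aP_y^2$, $\Pi=\frac a{\dot x}P_a$ (geodesic Hamiltonian of $g=\dot x^2a^{-2}da^2+a^{-1}dy^2$, $y\in\mathbb{R}$); $G=\sum_{k=0}^nA_{n-k}H^{n-k}P_y^{2k+1}$, $Q_1=\sum_{k=0}^n\tilde b_kH^{n-k}\Pi P_y^{2k}$, $Q_2=\sum_{k=0}^n\tilde c_kH^{n-k}P_y^{2k+1}$, $S_1=Q_1+yG$, $S_2=Q_2+yQ_1+\frac{y^2}2G$, with $\tilde b_k=(-1)^k(\nu_n\sigma_k+\sum_i\frac{\xi'_i}{\sqrt{\Delta_i}}\sigma^i_{k-1})$, $\tilde c_k=\frac{(-1)^{k+1}}2\{\nu_n^2a\sigma_k+2\nu_n\sum_i\frac{\xi'_i}{\sqrt{\Delta_i}}(\sigma^i_k+a\sigma^i_{k-1})+\sum_i\frac{\xi_i'^2}{\Delta_i}\sigma^i_{k-1}+\sum_{i\neq j}\frac{\xi'_i\xi'_j}{\sqrt{\Delta_i\Delta_j}}(\sigma^{ij}_{k-1}+a\sigma^{ij}_{k-2})\}$; $\sigma_k$ by $\prod_i(a-a_i)=\sum_k(-1)^k\sigma_ka^{n-k}$, $\sigma^i_m$ by $\prod_{l\ne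 i}(a-a_l)=\sum_{m=0}^{n-1}(-1)^m\sigma^i_ma^{n-1-m}$, $\sigma^i_{-1}=\sigma^i_n=0$, $\sigma^{ij}_m$ by $\prod_{l\ne i,j}(a-a_l)=\sum_{m=0}^{n-2}(-1)^m\sigma^{ij}_ma^{n-2-m}$, $\sigma^{ij}_{-2}=\sigma^{ij}_{-1}=\sigma^{ij}_{n-1}=\sigma^{ij}_n=0$. "Globally defined on $M\cong\mathbb{H}^2$": $g$ is a smooth Riemannian metric on the whole domain $M=(0,\sqrt{a_1})_u\times\mathbb{R}_y$, there is a smooth diffeomorphism $t=t(u)$ of $(0,\sqrt{a_1})$ onto $(0,\infty)$ or $(-\infty,0)$ with $g=\Phi(dt^2+dy^2)/t^2$, $\Phi$ smooth positive, and $S_1,S_2$ are smooth on $T^*M$. *)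

theory Defs
  imports "HOL-Analysis.Analysis" "HOL-Computational_Algebra.Polynomial"
begin

text \<open>C^k via iterated partial derivatives along the standard basis, each continuous.
  On open sets this is the usual C^k; smooth means C^k for all k.\<close>

fun Ck_on :: "nat \<Rightarrow> 'a::euclidean_space set \<Rightarrow> ('a \<Rightarrow> real) \<Rightarrow> bool" where
  "Ck_on 0 S f = continuous_on S f"
| "Ck_on (Suc k) S f =
     (continuous_on S f \<and>
      (\<forall>b\<in>Basis. \<exists>g. (\<forall>x\<in>S. ((\<lambda>t. f (x + t *\<^sub>R b)) has_real_derivative g x) (at 0))
                    \<and> Ck_on k S g))"

definition smooth_on :: "'a::euclidean_space set \<Rightarrow> ('a \<Rightarrow> real) \<Rightarrow> bool" where
  "smooth_on S f \<longleftrightarrow> (\<forall>k. Ck_on k S f)"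

text \<open>Roots a_1..a_n are given by Aa :: nat => real on indices {1..n}.
  Coefficients xi'_i by xi' on {1..n}. All signs epsilon_i = -1, so Delta_i = a_i - a.\<close>

definition Fpoly :: "nat \<Rightarrow> (nat \<Rightarrow> real) \<Rightarrow> real poly" where
  "Fpoly n Aa = (\<Prod>i\<in>{1..n}. [:- Aa i, 1:])"

definition Acoef :: "nat \<Rightarrow> (nat \<Rightarrow> real) \<Rightarrow> nat \<Rightarrow> real" where
  "Acoef n Aa k = coeff (Fpoly n Aa) k"

definition sig :: "(nat \<Rightarrow> real) \<Rightarrow> nat set \<Rightarrow> int \<Rightarrow> real" where
  "sig Aa I m = (if 0 \<le> m \<and> m \<le> int (card I)
                 then (-1) ^ nat m * coeff (\<Prod>l\<in>I. [:- Aa l, 1:]) (card I - nat m)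
                 else 0)"

definition Delta :: "(nat \<Rightarrow> real) \<Rightarrow> nat \<Rightarrow> real \<Rightarrow> real" where
  "Delta Aa i a = - (a - Aa i)"

definition xfun :: "nat \<Rightarrow> (nat \<Rightarrow> real) \<Rightarrow> real \<Rightarrow> (nat \<Rightarrow> real) \<Rightarrow> real \<Rightarrow> real" where
  "xfun n Aa nu xi' a = nu / 2 * a + (\<Sum>i\<in>{1..n}. xi' i / sqrt (Delta Aa i a))"

definition xdot :: "nat \<Rightarrow> (nat \<Rightarrow> real) \<Rightarrow> real \<Rightarrow> (nat \<Rightarrow> real) \<Rightarrow> real \<Rightarrow> real" where
  "xdot n Aa nu xi' a = deriv (xfun n Aa nu xi') a"

definition btil :: "nat \<Rightarrow> (nat \<Rightarrow> real) \<Rightarrow> real \<Rightarrow> (nat \<Rightarrow> real) \<Rightarrow> nat \<Rightarrow> real \<Rightarrow> real" where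
  "btil n Aa nu xi' k a = (-1) ^ k *
     (nu * sig Aa {1..n} (int k)
      + (\<Sum>i\<in>{1..n}. xi' i / sqrt (Delta Aa i a) * sig Aa ({1..n} - {i}) (int k - 1)))"

definition ctil :: "nat \<Rightarrow> (nat \<Rightarrow> real) \<Rightarrow> real \<Rightarrow> (nat \<Rightarrow> real) \<Rightarrow> nat \<Rightarrow> real \<Rightarrow> real" where
  "ctil n Aa nu xi' k a = (-1) ^ (k + 1) / 2 *
     (nu ^ 2 * a * sig Aa {1..n} (int k)
      + 2 * nu * (\<Sum>i\<in>{1..n}. xi' i / sqrt (Delta Aa i a) *
            (sig Aa ({1..n} - {i}) (int k) + a * sig Aa ({1..n} - {i}) (int k - 1)))
      + (\<Sum>i\<in>{1..n}. (xi' i) ^ 2 / Delta Aa i a * sig Aa ({1..n} - {i}) (int k - 1))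
      + (\<Sum>i\<in>{1..n}. \<Sum>j\<in>{1..n} - {i}.
            xi' i * xi' j / sqrt (Delta Aa i a * Delta Aa j a) *
            (sig Aa ({1..n} - {i, j}) (int k - 1) + a * sig Aa ({1..n} - {i, j}) (int k - 2))))"

definition PiF :: "nat \<Rightarrow> (nat \<Rightarrow> real) \<Rightarrow> real \<Rightarrow> (nat \<Rightarrow> real) \<Rightarrow> real \<Rightarrow> real \<Rightarrow> real" where
  "PiF n Aa nu xi' a Pa = a / xdot n Aa nu xi' a * Pa"

definition HF :: "nat \<Rightarrow> (nat \<Rightarrow> real) \<Rightarrow> real \<Rightarrow> (nat \<Rightarrow> real) \<Rightarrow> real \<Rightarrow> real \<Rightarrow> real \<Rightarrow> real" where
  "HF n Aa nu xi' a Pa Py = (PiF n Aa nu xi' a Pa) ^ 2 + a * Py ^ 2"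

definition GF :: "nat \<Rightarrow> (nat \<Rightarrow> real) \<Rightarrow> real \<Rightarrow> (nat \<Rightarrow> real) \<Rightarrow> real \<Rightarrow> real \<Rightarrow> real \<Rightarrow> real" where
  "GF n Aa nu xi' a Pa Py =
     (\<Sum>k\<in>{0..n}. Acoef n Aa (n - k) * (HF n Aa nu xi' a Pa Py) ^ (n - k) * Py ^ (2 * k + 1))"

definition Q1F :: "nat \<Rightarrow> (nat \<Rightarrow> real) \<Rightarrow> real \<Rightarrow> (nat \<Rightarrow> real) \<Rightarrow> real \<Rightarrow> real \<Rightarrow> real \<Rightarrow> real" where
  "Q1F n Aa nu xi' a Pa Py =
     (\<Sum>k\<in>{0..n}. btil n Aa nu xi' k a * (HF n Aa nu xi' a Pa Py) ^ (n - k)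
                   * PiF n Aa nu xi' a Pa * Py ^ (2 * k))"

definition Q2F :: "nat \<Rightarrow> (nat \<Rightarrow> real) \<Rightarrow> real \<Rightarrow> (nat \<Rightarrow> real) \<Rightarrow> real \<Rightarrow> real \<Rightarrow> real \<Rightarrow> real" where
  "Q2F n Aa nu xi' a Pa Py =
     (\<Sum>k\<in>{0..n}. ctil n Aa nu xi' k a * (HF n Aa nu xi' a Pa Py) ^ (n - k) * Py ^ (2 * k + 1))"

definition S1F :: "nat \<Rightarrow> (nat \<Rightarrow> real) \<Rightarrow> real \<Rightarrow> (nat \<Rightarrow> real) \<Rightarrow> real \<Rightarrow> real \<Rightarrow> real \<Rightarrow> real \<Rightarrow> real" where
  "S1F n Aa nu xi' a y Pa Py = Q1F n Aa nu xi' a Pa Py + y * GF n Aa nu xi' a Pa Py"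

definition S2F :: "nat \<Rightarrow> (nat \<Rightarrow> real) \<Rightarrow> real \<Rightarrow> (nat \<Rightarrow> real) \<Rightarrow> real \<Rightarrow> real \<Rightarrow> real \<Rightarrow> real \<Rightarrow> real" where
  "S2F n Aa nu xi' a y Pa Py = Q2F n Aa nu xi' a Pa Py + y * Q1F n Aa nu xi' a Pa Py
                                + y ^ 2 / 2 * GF n Aa nu xi' a Pa Py"

definition Mset :: "(nat \<Rightarrow> real) \<Rightarrow> (real \<times> real) set" where
  "Mset Aa = {0 <..< sqrt (Aa 1)} \<times> UNIV"

text \<open>Components of g = xdot^2 a^{-2} da^2 + a^{-1} dy^2 pulled back along a = u^2
  (so da = 2u du).\<close>
definition g_uu :: "nat \<Rightarrow> (nat \<Rightarrow> real) \<Rightarrow> real \<Rightarrow> (nat \<Rightarrow> real) \<Rightarrow> real \<times> real \<Rightarrow> real" where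
  "g_uu n Aa nu xi' p = (let u = fst p in
       (xdot n Aa nu xi' (u ^ 2)) ^ 2 / (u ^ 2) ^ 2 * (2 * u) ^ 2)"

definition g_uy :: "nat \<Rightarrow> (nat \<Rightarrow> real) \<Rightarrow> real \<Rightarrow> (nat \<Rightarrow> real) \<Rightarrow> real \<times> real \<Rightarrow> real" where
  "g_uy n Aa nu xi' p = 0"

definition g_yy :: "nat \<Rightarrow> (nat \<Rightarrow> real) \<Rightarrow> real \<Rightarrow> (nat \<Rightarrow> real) \<Rightarrow> real \<times> real \<Rightarrow> real" where
  "g_yy n Aa nu xi' p = 1 / (fst p) ^ 2"

text \<open>Cotangent-lifted coordinates on T*M: (u, y, p_u, p_y) with P_a = p_u / (2u).\<close>
definition S1_TM :: "nat \<Rightarrow> (nat \<Rightarrow> real) \<Rightarrow> real \<Rightarrow> (nat \<Rightarrow> real) \<Rightarrow> real \<times> real \<times> real \<times> real \<Rightarrow> real" where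
  "S1_TM n Aa nu xi' z = (case z of (u, y, pu, py) \<Rightarrow> S1F n Aa nu xi' (u ^ 2) y (pu / (2 * u)) py)"

definition S2_TM :: "nat \<Rightarrow> (nat \<Rightarrow> real) \<Rightarrow> real \<Rightarrow> (nat \<Rightarrow> real) \<Rightarrow> real \<times> real \<times> real \<times> real \<Rightarrow> real" where
  "S2_TM n Aa nu xi' z = (case z of (u, y, pu, py) \<Rightarrow> S2F n Aa nu xi' (u ^ 2) y (pu / (2 * u)) py)"

definition globally_defined :: "nat \<Rightarrow> (nat \<Rightarrow> real) \<Rightarrow> real \<Rightarrow> (nat \<Rightarrow> real) \<Rightarrow> bool" where
  "globally_defined n Aa nu xi' \<longleftrightarrow>
     \<comment> \<open>g is a smooth Riemannian metric on M\<close>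
     (smooth_on (Mset Aa) (g_uu n Aa nu xi') \<and> smooth_on (Mset Aa) (g_uy n Aa nu xi')
      \<and> smooth_on (Mset Aa) (g_yy n Aa nu xi')
      \<and> (\<forall>p\<in>Mset Aa. g_uu n Aa nu xi' p > 0 \<and>
            g_uu n Aa nu xi' p * g_yy n Aa nu xi' p - (g_uy n Aa nu xi' p) ^ 2 > 0))
   \<and> \<comment> \<open>a smooth diffeomorphism t of (0, sqrt a_1) onto a half-line, with g = Phi (dt^2+dy^2)/t^2\<close>
     (\<exists>t :: real \<Rightarrow> real. \<exists>V :: real set. \<exists>\<Phi> :: real \<times> real \<Rightarrow> real.
        (V = {0<..} \<or> V = {..<0}) \<and>
        bij_betw t {0 <..< sqrt (Aa 1)} V \<and>
        smooth_on {0 <..< sqrt (Aa 1)} t \<and>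
        smooth_on V (inv_into {0 <..< sqrt (Aa 1)} t) \<and>
        smooth_on (Mset Aa) \<Phi> \<and> (\<forall>p\<in>Mset Aa. \<Phi> p > 0) \<and>
        (\<forall>p\<in>Mset Aa.
           g_uu n Aa nu xi' p = \<Phi> p * (deriv t (fst p)) ^ 2 / (t (fst p)) ^ 2 \<and>
           g_uy n Aa nu xi' p = 0 \<and>
           g_yy n Aa nu xi' p = \<Phi> p / (t (fst p)) ^ 2))
   \<and> \<comment> \<open>S1, S2 smooth on T*M\<close>
     smooth_on (Mset Aa \<times> UNIV) (\<lambda>(p, q). S1_TM n Aa nu xi' (fst p, snd p, fst q, snd q))
   \<and> smooth_on (Mset Aa \<times> UNIV) (\<lambda>(p, q). S2_TM n Aa nu xi' (fst p, snd p, fst q, snd q))"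

end

theory Submission
  imports Defs "HOL-Real_Asymp.Real_Asymp"
begin

text \<open>
  With u = sqrt a the metric is g = (mu(u)^2 du^2 + dy^2) / u^2, where
  mu(u) = 2 x'(u^2) = 1 + sum_i xi'_i / (a_i - u^2)^(3/2). The function
  t(u) = u (1 + sum_i xi'_i / (a_i sqrt (a_i - u^2))) satisfies t' = mu, hence
  g = (t/u)^2 (dt^2 + dy^2) / t^2. If xi'_1 = 1 and all xi'_i >= 0 then mu >= 1; if xi'_1 = -1
  and all xi'_i <= 0 then mu(u) <= mu(0) = 1 - sum_i |xi'_i| / a_i^(3/2) < 0 by the extra
  hypothesis. Either way t is strictly monotone with t(0) = 0, and the i = 1 term drives |t| to
  infinity as u tends to sqrt a_1, so t is a diffeomorphism onto a half-line. Smoothness of g,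
  S_1 and S_2 is elementary: for u < sqrt a_1 every Delta_i = a_i - u^2 is positive and
  x' = mu/2 does not vanish.
\<close>

section \<open>Calculus of \<open>C\<^sup>k\<close> functions\<close>

lemma Ck_on_SucD: "Ck_on (Suc k) S f \<Longrightarrow> Ck_on k S f"
proof (induction k arbitrary: f)
  case (Suc k)
  then show ?case by (metis Ck_on.simps(2))
qed simp

lemma Ck_on_imp_continuous_on: "Ck_on k S f \<Longrightarrow> continuous_on S f"
  by (cases k) auto

lemma Ck_on_const [simp]: "Ck_on k S (\<lambda>x. c)"
proof (induction k arbitrary: c)
  case (Suc k)
  then show ?case by (auto intro!: exI[of _ "\<lambda>x. 0"])
qed simp

lemma Ck_on_add: "Ck_on k S f \<Longrightarrow> Ck_on k S g \<Longrightarrow> Ck_on k S (\<lambda>x. f x + g x)"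
proof (induction k arbitrary: f g)
  case 0
  then show ?case by (auto intro: continuous_intros)
next
  case (Suc k)
  show ?case
  proof (simp, intro conjI ballI)
    show "continuous_on S (\<lambda>x. f x + g x)"
      using Suc.prems by (auto intro: continuous_intros)
    fix b :: 'a assume b: "b \<in> Basis"
    from Suc.prems(1) b obtain f' where
      f': "\<forall>x\<in>S. ((\<lambda>t. f (x + t *\<^sub>R b)) has_real_derivative f' x) (at 0)" "Ck_on k S f'"
      by auto
    from Suc.prems(2) b obtain g' where
      g': "\<forall>x\<in>S. ((\<lambda>t. g (x + t *\<^sub>R b)) has_real_derivative g' x) (at 0)" "Ck_on k S g'"
      by auto
    show "\<exists>h. (\<forall>x\<in>S. ((\<lambda>t. f (x + t *\<^sub>R b) + g (x + t *\<^sub>R b)) has_real_derivative h x) (at 0))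
              \<and> Ck_on k S h"
      by (rule exI[of _ "\<lambda>x. f' x + g' x"]) (use f' g' Suc.IH in \<open>auto intro: derivative_intros\<close>)
  qed
qed

lemma Ck_on_mult: "Ck_on k S f \<Longrightarrow> Ck_on k S g \<Longrightarrow> Ck_on k S (\<lambda>x. f x * g x)"
proof (induction k arbitrary: f g)
  case 0
  then show ?case by (auto intro: continuous_intros)
next
  case (Suc k)
  show ?case
  proof (simp, intro conjI ballI)
    show "continuous_on S (\<lambda>x. f x * g x)"
      using Suc.prems by (auto intro: continuous_intros)
    fix b :: 'a assume b: "b \<in> Basis"
    from Suc.prems(1) b obtain f' where
      f': "\<forall>x\<in>S. ((\<lambda>t. f (x + t *\<^sub>R b)) has_real_derivative f' x) (at 0)" "Ck_on k S f'"
      by auto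
    from Suc.prems(2) b obtain g' where
      g': "\<forall>x\<in>S. ((\<lambda>t. g (x + t *\<^sub>R b)) has_real_derivative g' x) (at 0)" "Ck_on k S g'"
      by auto
    have fg: "Ck_on k S f" "Ck_on k S g"
      using Suc.prems by (auto intro: Ck_on_SucD)
    show "\<exists>h. (\<forall>x\<in>S. ((\<lambda>t. f (x + t *\<^sub>R b) * g (x + t *\<^sub>R b)) has_real_derivative h x) (at 0))
              \<and> Ck_on k S h"
    proof (rule exI[of _ "\<lambda>x. f' x * g x + f x * g' x"], intro conjI ballI)
      fix x assume x: "x \<in> S"
      show "((\<lambda>t. f (x + t *\<^sub>R b) * g (x + t *\<^sub>R b)) has_real_derivative f' x * g x + f x * g' x) (at 0)"
        using DERIV_mult[OF f'(1)[rule_format, OF x] g'(1)[rule_format, OF x]]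
        by (simp add: mult.commute)
    next
      show "Ck_on k S (\<lambda>x. f' x * g x + f x * g' x)"
        using Suc.IH f'(2) g'(2) fg by (intro Ck_on_add) blast+
    qed
  qed
qed

lemma Ck_on_bounded_linear:
  fixes L :: "'a::euclidean_space \<Rightarrow> real"
  assumes "bounded_linear L"
  shows "Ck_on k S L"
proof (cases k)
  case 0
  then show ?thesis using assms by (auto intro: linear_continuous_on)
next
  case (Suc m)
  interpret bounded_linear L by fact
  have deriv: "((\<lambda>t. L (x + t *\<^sub>R b)) has_real_derivative L b) (at 0)" for x b
  proof -
    have "(\<lambda>t. L (x + t *\<^sub>R b)) = (\<lambda>t. L x + t * L b)"
      by (simp add: add scale)
    then show ?thesis by (auto intro!: derivative_eq_intros)
  qed
  show ?thesis
    unfolding Suc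
  proof (simp, intro conjI ballI)
    show "continuous_on S L"
      using assms by (rule linear_continuous_on)
    fix b :: 'a
    show "\<exists>g. (\<forall>x\<in>S. ((\<lambda>t. L (x + t *\<^sub>R b)) has_real_derivative g x) (at 0)) \<and> Ck_on m S g"
      using deriv by (intro exI[of _ "\<lambda>x. L b"]) simp
  qed
qed

lemma Ck_on_ident: "Ck_on k S (\<lambda>x::real. x)"
  by (rule Ck_on_bounded_linear) (rule bounded_linear_ident)

lemma Ck_on_fst: "Ck_on k S (\<lambda>p::real \<times> 'b::euclidean_space. fst p)"
  by (rule Ck_on_bounded_linear) (rule bounded_linear_fst)

lemma Ck_on_fst_fst: "Ck_on k S (\<lambda>p::(real \<times> 'b::euclidean_space) \<times> 'c::euclidean_space. fst (fst p))"
  by (rule Ck_on_bounded_linear)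
     (rule bounded_linear_compose[OF bounded_linear_fst bounded_linear_fst, unfolded o_def])

lemma Ck_on_snd_fst: "Ck_on k S (\<lambda>p::('a::euclidean_space \<times> real) \<times> 'c::euclidean_space. snd (fst p))"
  by (rule Ck_on_bounded_linear)
     (rule bounded_linear_compose[OF bounded_linear_snd bounded_linear_fst, unfolded o_def])

lemma Ck_on_fst_snd: "Ck_on k S (\<lambda>p::'a::euclidean_space \<times> (real \<times> 'c::euclidean_space). fst (snd p))"
  by (rule Ck_on_bounded_linear)
     (rule bounded_linear_compose[OF bounded_linear_fst bounded_linear_snd, unfolded o_def])

lemma Ck_on_snd_snd: "Ck_on k S (\<lambda>p::'a::euclidean_space \<times> ('b::euclidean_space \<times> real). snd (snd p))"
  by (rule Ck_on_bounded_linear)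
     (rule bounded_linear_compose[OF bounded_linear_snd bounded_linear_snd, unfolded o_def])

lemma Ck_on_Suc_real_iff:
  "Ck_on (Suc k) (U::real set) f \<longleftrightarrow>
     continuous_on U f \<and> (\<exists>g. (\<forall>x\<in>U. (f has_real_derivative g x) (at x)) \<and> Ck_on k U g)"
proof -
  have "((\<lambda>t. f (x + t *\<^sub>R 1)) has_real_derivative d) (at 0) \<longleftrightarrow> (f has_real_derivative d) (at x)"
    for x d
    using DERIV_shift[of f _ 0] by (simp add: add.commute)
  then show ?thesis by (simp add: Basis_real_def)
qed

lemma Ck_on_compose:
  fixes h :: "real \<Rightarrow> real"
  assumes "Ck_on k U h" "Ck_on k S g" "g ` S \<subseteq> U"
  shows "Ck_on k S (\<lambda>x. h (g x))"
  using assms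
proof (induction k arbitrary: h g)
  case 0
  then show ?case by (auto intro: continuous_on_compose2)
next
  case (Suc k)
  show ?case
  proof (simp, intro conjI ballI)
    show "continuous_on S (\<lambda>x. h (g x))"
      using Suc.prems by (auto intro: continuous_on_compose2 Ck_on_imp_continuous_on)
    fix b :: 'a assume b: "b \<in> Basis"
    from Suc.prems(1) obtain h' where
      h': "\<forall>x\<in>U. (h has_real_derivative h' x) (at x)" "Ck_on k U h'"
      unfolding Ck_on_Suc_real_iff by blast
    from Suc.prems(2) b obtain g' where
      g': "\<forall>x\<in>S. ((\<lambda>t. g (x + t *\<^sub>R b)) has_real_derivative g' x) (at 0)" "Ck_on k S g'"
      by auto
    have "Ck_on k S g"
      using Suc.prems by (auto intro: Ck_on_SucD)
    show "\<exists>q. (\<forall>x\<in>S. ((\<lambda>t. h (g (x + t *\<^sub>R b))) has_real_derivative q x) (at 0))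
              \<and> Ck_on k S q"
    proof (rule exI[of _ "\<lambda>x. h' (g x) * g' x"], intro conjI ballI)
      fix x assume x: "x \<in> S"
      have "(h has_real_derivative h' (g x)) (at (g x))"
        using h'(1) Suc.prems(3) x by auto
      then show "((\<lambda>t. h (g (x + t *\<^sub>R b))) has_real_derivative h' (g x) * g' x) (at 0)"
        using DERIV_chain2[OF _ g'(1)[rule_format, OF x], of h] by simp
    next
      show "Ck_on k S (\<lambda>x. h' (g x) * g' x)"
        using Suc.IH[OF h'(2) \<open>Ck_on k S g\<close> Suc.prems(3)] g'(2) by (rule Ck_on_mult)
    qed
  qed
qed

lemma Ck_on_cong:
  assumes "open S" "\<And>x. x \<in> S \<Longrightarrow> f x = g x" "Ck_on k S f"
  shows "Ck_on k S g"
proof (cases k)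
  case 0
  then show ?thesis using assms continuous_on_cong by force
next
  case (Suc m)
  have deriv_cong: "((\<lambda>t. g (x + t *\<^sub>R b)) has_real_derivative d) (at 0)"
    if "x \<in> S" "((\<lambda>t. f (x + t *\<^sub>R b)) has_real_derivative d) (at 0)" for x b d
  proof -
    have "open ((\<lambda>t::real. x + t *\<^sub>R b) -` S)"
      by (rule continuous_open_vimage[OF assms(1)]) (intro continuous_intros)
    then have "eventually (\<lambda>t. x + t *\<^sub>R b \<in> S) (nhds 0)"
      using that(1) eventually_nhds_in_open by fastforce
    then have "eventually (\<lambda>t. f (x + t *\<^sub>R b) = g (x + t *\<^sub>R b)) (nhds 0)"
      by eventually_elim (use assms(2) in auto)
    from DERIV_cong_ev[OF refl this refl] show ?thesis
      using that(2) by simp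
  qed
  show ?thesis
    unfolding Suc
  proof (simp, intro conjI ballI)
    show "continuous_on S g"
      using assms(2,3) continuous_on_cong Ck_on_imp_continuous_on by metis
    fix b :: 'a assume b: "b \<in> Basis"
    from assms(3) b obtain f' where
      f': "\<forall>x\<in>S. ((\<lambda>t. f (x + t *\<^sub>R b)) has_real_derivative f' x) (at 0)" "Ck_on m S f'"
      unfolding Suc by auto
    show "\<exists>q. (\<forall>x\<in>S. ((\<lambda>t. g (x + t *\<^sub>R b)) has_real_derivative q x) (at 0)) \<and> Ck_on m S q"
      using f' deriv_cong by (intro exI[of _ f']) blast
  qed
qed

lemma Ck_on_powr: "Ck_on k {0<..} (\<lambda>x. c * x powr r)"
proof (induction k arbitrary: c r)
  case 0
  then show ?case by (auto intro!: continuous_intros)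
next
  case (Suc k)
  show ?case unfolding Ck_on_Suc_real_iff
  proof (intro conjI exI[of _ "\<lambda>x. (c * r) * x powr (r - 1)"] ballI Suc)
    show "continuous_on {0<..} (\<lambda>x. c * x powr r)"
      by (auto intro!: continuous_intros)
    fix x :: real assume "x \<in> {0<..}"
    then show "((\<lambda>x. c * x powr r) has_real_derivative c * r * x powr (r - 1)) (at x)"
      by (auto intro!: derivative_eq_intros)
  qed
qed

lemma Ck_on_inverse_power: "Ck_on k (- {0}) (\<lambda>x. c * inverse x ^ m)"
proof (induction k arbitrary: c m)
  case 0
  then show ?case by (auto intro!: continuous_intros)
next
  case (Suc k)
  show ?case unfolding Ck_on_Suc_real_iff
  proof (intro conjI exI[of _ "\<lambda>x. (- c * real m) * inverse x ^ Suc m"] ballI Suc)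
    show "continuous_on (- {0}) (\<lambda>x. c * inverse x ^ m)"
      by (auto intro!: continuous_intros)
    fix x :: real assume "x \<in> - {0}"
    then have "((\<lambda>x. c * inverse x ^ m) has_real_derivative
                 c * (real m * inverse x ^ (m - 1) * (- (inverse x * inverse x)))) (at x)"
      by (auto intro!: derivative_eq_intros)
    moreover have "c * (real m * inverse x ^ (m - 1) * (- (inverse x * inverse x)))
                   = (- c * real m) * inverse x ^ Suc m"
      by (cases m) (auto simp: power_Suc)
    ultimately show "((\<lambda>x. c * inverse x ^ m) has_real_derivative (- c * real m) * inverse x ^ Suc m) (at x)"
      by (rule DERIV_cong)
  qed
qed

lemma Ck_on_sqrt:
  assumes "Ck_on k S f" "\<And>x. x \<in> S \<Longrightarrow> 0 < f x"
  shows "Ck_on k S (\<lambda>x. sqrt (f x))"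
proof -
  have "Ck_on k {0<..} sqrt"
    by (rule Ck_on_cong[OF _ _ Ck_on_powr[of k 1 "1/2"]]) (auto simp: powr_half_sqrt)
  then show ?thesis
    using Ck_on_compose[of k "{0<..}" sqrt S f] assms by auto
qed

lemma Ck_on_inverse:
  assumes "Ck_on k S f" "\<And>x. x \<in> S \<Longrightarrow> f x \<noteq> 0"
  shows "Ck_on k S (\<lambda>x. inverse (f x))"
proof -
  have "f ` S \<subseteq> - {0}"
    using assms(2) by auto
  then show ?thesis
    using Ck_on_compose[OF Ck_on_inverse_power[of k 1 1] assms(1)] by simp
qed

lemma Ck_on_divide:
  assumes "Ck_on k S f" "Ck_on k S g" "\<And>x. x \<in> S \<Longrightarrow> g x \<noteq> 0"
  shows "Ck_on k S (\<lambda>x. f x / g x)"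
  using Ck_on_mult[OF assms(1) Ck_on_inverse[OF assms(2,3)]] by (simp add: divide_inverse)

lemma Ck_on_minus: "Ck_on k S f \<Longrightarrow> Ck_on k S (\<lambda>x. - f x)"
  using Ck_on_mult[OF Ck_on_const[of k S "-1"], of f] by simp

lemma Ck_on_diff: "Ck_on k S f \<Longrightarrow> Ck_on k S g \<Longrightarrow> Ck_on k S (\<lambda>x. f x - g x)"
  using Ck_on_add[OF _ Ck_on_minus, of k S f g] by simp

lemma Ck_on_power: "Ck_on k S f \<Longrightarrow> Ck_on k S (\<lambda>x. f x ^ m)"
  by (induction m) (auto intro: Ck_on_mult)

lemma Ck_on_sum: "(\<And>i. i \<in> I \<Longrightarrow> Ck_on k S (f i)) \<Longrightarrow> Ck_on k S (\<lambda>x. \<Sum>i\<in>I. f i x)"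
  by (induction I rule: infinite_finite_induct) (auto intro: Ck_on_add)

lemmas Ck_on_intros = Ck_on_const Ck_on_add Ck_on_diff Ck_on_mult Ck_on_divide Ck_on_sqrt
  Ck_on_power Ck_on_sum Ck_on_minus Ck_on_ident
  Ck_on_fst Ck_on_fst_fst Ck_on_snd_fst Ck_on_fst_snd Ck_on_snd_snd

lemma has_real_derivative_inv_into:
  fixes t t' :: "real \<Rightarrow> real"
  assumes I: "open I" and V: "open V" and bij: "bij_betw t I V"
    and deriv: "\<And>u. u \<in> I \<Longrightarrow> (t has_real_derivative t' u) (at u)"
    and nonzero: "\<And>u. u \<in> I \<Longrightarrow> t' u \<noteq> 0"
    and v: "v \<in> V"
  shows "(inv_into I t has_real_derivative inverse (t' (inv_into I t v))) (at v)"
proof -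
  define g where "g = inv_into I t"
  have gt: "g (t u) = u" if "u \<in> I" for u
    unfolding g_def using bij that bij_betw_inv_into_left by fastforce
  have tg: "t (g w) = w" if "w \<in> V" for w
    unfolding g_def using bij that bij_betw_inv_into_right by fastforce
  have gV: "g w \<in> I" if "w \<in> V" for w
    unfolding g_def using bij that by (metis bij_betw_def inv_into_into)
  obtain d where d: "0 < d" "cball (g v) d \<subseteq> I"
    using I gV[OF v] open_contains_cball by blast
  have near: "z \<in> I" if "\<bar>z - g v\<bar> \<le> d" for z
    using d(2) that by (auto simp: cball_def dist_real_def abs_minus_commute)
  have "isCont g (t (g v))"
    using d(1) gt near deriv DERIV_isCont by (intro isCont_inverse_function[where f = t]) blast+
  then have cont: "isCont g v"
    using tg v by simp
  obtain e where e: "0 < e" "ball v e \<subseteq> V"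
    using V v open_contains_ball by blast
  have "t (g y) = y" if "v - e < y" "y < v + e" for y
  proof -
    have "y \<in> ball v e"
      using that by (auto simp: dist_real_def)
    then show ?thesis
      using tg e(2) by blast
  qed
  then show ?thesis
    unfolding g_def[symmetric] using e(1) deriv nonzero gV v cont
    by (intro DERIV_inverse_function[where a = "v - e" and b = "v + e"]) auto
qed

lemma Ck_on_inv_into:
  fixes t t' :: "real \<Rightarrow> real"
  assumes "open I" "open V" "bij_betw t I V"
    and deriv: "\<And>u. u \<in> I \<Longrightarrow> (t has_real_derivative t' u) (at u)"
    and nonzero: "\<And>u. u \<in> I \<Longrightarrow> t' u \<noteq> 0"
    and smooth: "\<And>k. Ck_on k I (\<lambda>u. inverse (t' u))"
  shows "Ck_on k V (inv_into I t)"
proof -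
  note inv_deriv = has_real_derivative_inv_into[OF assms(1-3) deriv nonzero]
  have cont: "continuous_on V (inv_into I t)"
    using inv_deriv DERIV_isCont by (blast intro: continuous_at_imp_continuous_on)
  have "inv_into I t ` V \<subseteq> I"
    using assms(3) by (metis bij_betw_def image_subsetI inv_into_into)
  show ?thesis
  proof (induction k)
    case 0
    show ?case using cont by simp
  next
    case (Suc k)
    show ?case
      unfolding Ck_on_Suc_real_iff
    proof (intro conjI cont exI[of _ "\<lambda>v. inverse (t' (inv_into I t v))"] ballI)
      show "Ck_on k V (\<lambda>v. inverse (t' (inv_into I t v)))"
        using Ck_on_compose[OF smooth Suc \<open>inv_into I t ` V \<subseteq> I\<close>] .
    qed (rule inv_deriv)
  qed
qed

section \<open>Smoothness of the metric and of the integrals\<close>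

definition xdot_formula :: "nat \<Rightarrow> (nat \<Rightarrow> real) \<Rightarrow> real \<Rightarrow> (nat \<Rightarrow> real) \<Rightarrow> real \<Rightarrow> real" where
  "xdot_formula n Aa nu \<xi> a = nu / 2 + (\<Sum>i\<in>{1..n}. \<xi> i / (2 * (Aa i - a) * sqrt (Aa i - a)))"

lemma has_real_derivative_xfun:
  assumes "\<And>i. i \<in> {1..n} \<Longrightarrow> a < Aa i"
  shows "(xfun n Aa nu \<xi> has_real_derivative xdot_formula n Aa nu \<xi> a) (at a)"
proof -
  have "((\<lambda>a. \<xi> i / sqrt (Delta Aa i a)) has_real_derivative \<xi> i / (2 * (Aa i - a) * sqrt (Aa i - a))) (at a)"
    if "i \<in> {1..n}" for i
    using assms[OF that] unfolding Delta_def by (auto intro!: derivative_eq_intros simp: field_simps)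
  then have "((\<lambda>a. \<Sum>i\<in>{1..n}. \<xi> i / sqrt (Delta Aa i a)) has_real_derivative
               (\<Sum>i\<in>{1..n}. \<xi> i / (2 * (Aa i - a) * sqrt (Aa i - a)))) (at a)"
    by (intro DERIV_sum) auto
  moreover have "((\<lambda>a. nu / 2 * a) has_real_derivative nu / 2) (at a)"
    by (auto intro!: derivative_eq_intros)
  ultimately show ?thesis
    unfolding xfun_def xdot_formula_def using DERIV_add by fastforce
qed

lemma xdot_eq_formula:
  "(\<And>i. i \<in> {1..n} \<Longrightarrow> a < Aa i) \<Longrightarrow> xdot n Aa nu \<xi> a = xdot_formula n Aa nu \<xi> a"
  unfolding xdot_def by (rule DERIV_imp_deriv) (rule has_real_derivative_xfun)

lemma Ck_on_xdot:
  assumes f: "Ck_on k S f" and below: "\<And>x i. x \<in> S \<Longrightarrow> i \<in> {1..n} \<Longrightarrow> f x < Aa i"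
  shows "Ck_on k S (\<lambda>x. xdot n Aa nu \<xi> (f x))"
proof -
  define U where "U = (\<Inter>i\<in>{1..n}. {..<Aa i})"
  have "open U"
    unfolding U_def by (intro open_INT) auto
  have formula: "Ck_on k U (xdot_formula n Aa nu \<xi>)"
    unfolding xdot_formula_def by (intro Ck_on_intros) (auto simp: U_def)
  have "xdot_formula n Aa nu \<xi> a = xdot n Aa nu \<xi> a" if "a \<in> U" for a
    using xdot_eq_formula[of n a Aa] that unfolding U_def by auto
  then have "Ck_on k U (xdot n Aa nu \<xi>)"
    using Ck_on_cong[OF \<open>open U\<close> _ formula] by blast
  moreover have "f ` S \<subseteq> U"
    using below by (auto simp: U_def)
  ultimately show ?thesis
    using Ck_on_compose f by blast
qed

lemma Ck_on_S1F_S2F: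
  assumes a: "Ck_on k S af" and y: "Ck_on k S yf" and pa: "Ck_on k S paf" and py: "Ck_on k S pyf"
    and below: "\<And>x i. x \<in> S \<Longrightarrow> i \<in> {1..n} \<Longrightarrow> af x < Aa i"
    and nonzero: "\<And>x. x \<in> S \<Longrightarrow> xdot n Aa nu \<xi> (af x) \<noteq> 0"
  shows "Ck_on k S (\<lambda>x. S1F n Aa nu \<xi> (af x) (yf x) (paf x) (pyf x))"
    and "Ck_on k S (\<lambda>x. S2F n Aa nu \<xi> (af x) (yf x) (paf x) (pyf x))"
proof -
  have below': "af x < Aa i" if "x \<in> S" "Suc 0 \<le> i" "i \<le> n" for x i
    using below that by simp
  then have distinct': "Aa i \<noteq> af x" if "x \<in> S" "Suc 0 \<le> i" "i \<le> n" for x i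
    using that by force
  have prod_pos: "0 < (Aa i - af x) * (Aa j - af x)"
    if "x \<in> S" "Suc 0 \<le> i" "i \<le> n" "Suc 0 \<le> j" "j \<le> n" for x i j
    using below' that by simp
  note facts = below' distinct' prod_pos nonzero
  show "Ck_on k S (\<lambda>x. S1F n Aa nu \<xi> (af x) (yf x) (paf x) (pyf x))"
    unfolding S1F_def Q1F_def GF_def HF_def PiF_def btil_def Delta_def
    by (intro Ck_on_intros Ck_on_xdot[OF a below] a y pa py) (simp_all add: facts)
  show "Ck_on k S (\<lambda>x. S2F n Aa nu \<xi> (af x) (yf x) (paf x) (pyf x))"
    unfolding S2F_def Q1F_def Q2F_def GF_def HF_def PiF_def btil_def ctil_def Delta_def
    by (intro Ck_on_intros Ck_on_xdot[OF a below] a y pa py) (simp_all add: facts)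
qed

section \<open>The half-plane coordinate and global definiteness\<close>

definition t_chart :: "nat \<Rightarrow> (nat \<Rightarrow> real) \<Rightarrow> (nat \<Rightarrow> real) \<Rightarrow> real \<Rightarrow> real" where
  "t_chart n Aa \<xi> u = u + (\<Sum>i\<in>{1..n}. \<xi> i * u / (Aa i * sqrt (Aa i - u\<^sup>2)))"

definition t_scale :: "nat \<Rightarrow> (nat \<Rightarrow> real) \<Rightarrow> (nat \<Rightarrow> real) \<Rightarrow> real \<Rightarrow> real" where
  "t_scale n Aa \<xi> u = 1 + (\<Sum>i\<in>{1..n}. \<xi> i / (Aa i * sqrt (Aa i - u\<^sup>2)))"

definition mu :: "nat \<Rightarrow> (nat \<Rightarrow> real) \<Rightarrow> (nat \<Rightarrow> real) \<Rightarrow> real \<Rightarrow> real" where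
  "mu n Aa \<xi> u = 1 + (\<Sum>i\<in>{1..n}. \<xi> i / ((Aa i - u\<^sup>2) * sqrt (Aa i - u\<^sup>2)))"

lemma t_chart_eq_mult: "t_chart n Aa \<xi> u = u * t_scale n Aa \<xi> u"
  unfolding t_chart_def t_scale_def by (simp add: sum_distrib_left algebra_simps)

lemma t_chart_0 [simp]: "t_chart n Aa \<xi> 0 = 0"
  by (simp add: t_chart_def)

lemma xdot_sq_eq_mu:
  assumes "\<And>i. i \<in> {1..n} \<Longrightarrow> u\<^sup>2 < Aa i"
  shows "xdot n Aa 1 \<xi> (u\<^sup>2) = mu n Aa \<xi> u / 2"
proof -
  have "xdot n Aa 1 \<xi> (u\<^sup>2) = xdot_formula n Aa 1 \<xi> (u\<^sup>2)"
    using assms by (rule xdot_eq_formula)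
  also have "\<dots> = mu n Aa \<xi> u / 2"
    unfolding xdot_formula_def mu_def add_divide_distrib sum_divide_distrib
    by (simp add: divide_divide_eq_left algebra_simps)
  finally show ?thesis .
qed

lemma has_real_derivative_chart_term:
  fixes A c u :: real
  assumes "u\<^sup>2 < A" "0 < A"
  shows "((\<lambda>u. c * u / (A * sqrt (A - u\<^sup>2))) has_real_derivative c / ((A - u\<^sup>2) * sqrt (A - u\<^sup>2))) (at u)"
proof -
  have pos: "0 < A - u\<^sup>2" "0 < sqrt (A - u\<^sup>2)"
    using assms by auto
  have sq: "sqrt (A - u\<^sup>2) * sqrt (A - u\<^sup>2) = A - u\<^sup>2"
    using pos by simp
  have "((\<lambda>u. c * u / (A * sqrt (A - u\<^sup>2))) has_real_derivative
     (c * (A * sqrt (A - u\<^sup>2)) - c * u * (A * (inverse (sqrt (A - u\<^sup>2)) / 2 * (- (2 * u)))))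
       / (A * sqrt (A - u\<^sup>2))\<^sup>2) (at u)"
    using assms pos by (auto intro!: derivative_eq_intros simp: power2_eq_square)
  moreover have "(c * (A * sqrt (A - u\<^sup>2)) - c * u * (A * (inverse (sqrt (A - u\<^sup>2)) / 2 * (- (2 * u)))))
       / (A * sqrt (A - u\<^sup>2))\<^sup>2 = c / ((A - u\<^sup>2) * sqrt (A - u\<^sup>2))"
    using assms pos sq by (simp add: field_simps power2_eq_square)
  ultimately show ?thesis
    by (rule DERIV_cong)
qed

lemma has_real_derivative_t_chart:
  assumes "\<And>i. i \<in> {1..n} \<Longrightarrow> u\<^sup>2 < Aa i \<and> 0 < Aa i"
  shows "(t_chart n Aa \<xi> has_real_derivative mu n Aa \<xi> u) (at u)"
proof -
  have "((\<lambda>u. \<Sum>i\<in>{1..n}. \<xi> i * u / (Aa i * sqrt (Aa i - u\<^sup>2))) has_real_derivative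
      (\<Sum>i\<in>{1..n}. \<xi> i / ((Aa i - u\<^sup>2) * sqrt (Aa i - u\<^sup>2)))) (at u)"
    using assms by (intro DERIV_sum has_real_derivative_chart_term) auto
  then show ?thesis
    unfolding t_chart_def mu_def using DERIV_add[OF DERIV_ident] by blast
qed

lemma sq_less_if_less_sqrt:
  fixes a u :: real
  assumes "0 \<le> u" "u < sqrt a"
  shows "u\<^sup>2 < a"
proof -
  have "0 < a"
    using assms by (metis le_less_trans real_sqrt_gt_0_iff)
  have "u\<^sup>2 < (sqrt a)\<^sup>2"
    using assms by (intro power_strict_mono) auto
  with \<open>0 < a\<close> show ?thesis
    by simp
qed

lemma bij_betw_half_line_if_deriv_pos:
  fixes f f' :: "real \<Rightarrow> real"
  assumes deriv: "\<And>u. 0 \<le> u \<Longrightarrow> u < c \<Longrightarrow> (f has_real_derivative f' u) (at u)"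
    and pos: "\<And>u. 0 \<le> u \<Longrightarrow> u < c \<Longrightarrow> 0 < f' u"
    and f0: "f 0 = 0"
    and unbounded: "\<And>M. \<exists>u\<in>{0<..<c}. M \<le> f u"
  shows "bij_betw f {0<..<c} {0<..}"
proof -
  have mono: "f a < f b" if "0 \<le> a" "a < b" "b < c" for a b
    using that(2)
  proof (rule DERIV_pos_imp_increasing)
    fix x assume "a \<le> x" "x \<le> b"
    with that have "0 \<le> x" "x < c"
      by linarith+
    with deriv pos show "\<exists>y. (f has_real_derivative y) (at x) \<and> 0 < y"
      by blast
  qed
  have "inj_on f {0<..<c}"
    by (intro strict_mono_on_imp_inj_on strict_mono_onI) (auto intro: mono)
  moreover have "f ` {0<..<c} = {0<..}"
  proof
    show "f ` {0<..<c} \<subseteq> {0<..}"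
      using mono[of 0] f0 by auto
    show "{0<..} \<subseteq> f ` {0<..<c}"
    proof
      fix s :: real assume "s \<in> {0<..}"
      obtain u where u: "u \<in> {0<..<c}" "s \<le> f u"
        using unbounded by blast
      have "isCont f x" if "x \<in> {0..u}" for x
        using that u deriv[of x, THEN DERIV_isCont] by simp
      then have "continuous_on {0..u} f"
        by (rule continuous_at_imp_continuous_on[rule_format])
      then obtain x where "0 \<le> x" "x \<le> u" "f x = s"
        using IVT'[of f 0 s u] u \<open>s \<in> {0<..}\<close> f0 by auto
      moreover have "x \<noteq> 0"
        using \<open>f x = s\<close> \<open>s \<in> {0<..}\<close> f0 by auto
      ultimately show "s \<in> f ` {0<..<c}"
        using u by force
    qed
  qed
  ultimately show ?thesis
    by (simp add: bij_betw_def)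
qed

lemma chart_term_unbounded:
  assumes "0 < (a::real)"
  shows "\<exists>u\<in>{0<..<sqrt a}. M \<le> u / (a * sqrt (a - u\<^sup>2))"
proof -
  have "filterlim (\<lambda>u. u / (a * sqrt (a - u\<^sup>2))) at_top (at_left (sqrt a))"
    using assms by real_asymp
  then have "eventually (\<lambda>u. M \<le> u / (a * sqrt (a - u\<^sup>2))) (at_left (sqrt a))"
    by (simp add: filterlim_at_top)
  moreover have "eventually (\<lambda>u. u \<in> {0<..<sqrt a}) (at_left (sqrt a))"
    using assms by (intro eventually_at_left_real) simp
  ultimately have "eventually (\<lambda>u. u \<in> {0<..<sqrt a} \<and> M \<le> u / (a * sqrt (a - u\<^sup>2))) (at_left (sqrt a))"
    by eventually_elim simp
  then show ?thesis
    using eventually_happens' trivial_limit_at_left_real by blast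
qed

lemma frac_le_chart_term:
  fixes A u w :: real
  assumes "u\<^sup>2 < A" "0 \<le> w"
  shows "w / (A * sqrt A) \<le> w / ((A - u\<^sup>2) * sqrt (A - u\<^sup>2))"
proof -
  have "0 < A - u\<^sup>2" "0 < A"
    using assms(1) zero_le_power2[of u] by linarith+
  then show ?thesis
    using assms(2) by (intro divide_left_mono mult_mono) auto
qed

context
  fixes n :: nat and Aa :: "nat \<Rightarrow> real"
  assumes Aa_min: "\<And>i. i \<in> {1..n} \<Longrightarrow> Aa 1 \<le> Aa i"
    and Aa1_pos: "0 < Aa 1"
begin

lemma below_Aa:
  assumes "0 \<le> u" "u < sqrt (Aa 1)" "i \<in> {1..n}"
  shows "u\<^sup>2 < Aa i" "0 < Aa i"
  using sq_less_if_less_sqrt[OF assms(1,2)] Aa_min[OF assms(3)] Aa1_pos by linarith+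

lemma interval_below_Aa:
  assumes "u \<in> {0<..<sqrt (Aa 1)}" "i \<in> {1..n}"
  shows "u\<^sup>2 < Aa i" "0 < Aa i" "Aa i \<noteq> u\<^sup>2" "Aa i \<noteq> 0"
  using below_Aa[of u i] assms by auto

lemma Mset_below_Aa:
  assumes "p \<in> Mset Aa" "i \<in> {1..n}"
  shows "(fst p)\<^sup>2 < Aa i" "0 < fst p"
  using assms below_Aa[of "fst p" i] by (auto simp: Mset_def)

lemma g_uu_eq_mu:
  assumes "p \<in> Mset Aa"
  shows "g_uu n Aa 1 \<xi> p = (mu n Aa \<xi> (fst p))\<^sup>2 / (fst p)\<^sup>2"
proof -
  have "\<And>i. i \<in> {1..n} \<Longrightarrow> (fst p)\<^sup>2 < Aa i"
    using Mset_below_Aa(1)[OF assms] .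
  then have "mu n Aa \<xi> (fst p) = 2 * xdot n Aa 1 \<xi> ((fst p)\<^sup>2)"
    by (simp only: xdot_sq_eq_mu)
  moreover have "fst p \<noteq> 0"
    using assms by (auto simp: Mset_def)
  ultimately show ?thesis
    unfolding g_uu_def Let_def by (simp add: power_divide power_mult_distrib power4_eq_xxxx power2_eq_square)
qed

lemma smooth_on_metric:
  "smooth_on (Mset Aa) (g_uu n Aa nu \<xi>)" "smooth_on (Mset Aa) (g_uy n Aa nu \<xi>)"
  "smooth_on (Mset Aa) (g_yy n Aa nu \<xi>)"
proof -
  have "Ck_on k (Mset Aa) (\<lambda>p. xdot n Aa nu \<xi> ((fst p)\<^sup>2))" for k
    by (rule Ck_on_xdot) (auto intro: Ck_on_intros Mset_below_Aa)
  then show "smooth_on (Mset Aa) (g_uu n Aa nu \<xi>)" "smooth_on (Mset Aa) (g_yy n Aa nu \<xi>)"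
    unfolding smooth_on_def g_uu_def g_yy_def Let_def
    by (auto intro!: Ck_on_intros simp: Mset_def)
  show "smooth_on (Mset Aa) (g_uy n Aa nu \<xi>)"
    by (simp add: smooth_on_def g_uy_def[abs_def])
qed

lemma metric_positive_definite:
  assumes "p \<in> Mset Aa" "mu n Aa \<xi> (fst p) \<noteq> 0"
  shows "0 < g_uu n Aa 1 \<xi> p" "0 < g_uu n Aa 1 \<xi> p * g_yy n Aa 1 \<xi> p - (g_uy n Aa 1 \<xi> p)\<^sup>2"
proof -
  have "fst p \<noteq> 0"
    using assms(1) by (auto simp: Mset_def)
  then show "0 < g_uu n Aa 1 \<xi> p"
    using assms by (simp add: g_uu_eq_mu)
  with \<open>fst p \<noteq> 0\<close> show "0 < g_uu n Aa 1 \<xi> p * g_yy n Aa 1 \<xi> p - (g_uy n Aa 1 \<xi> p)\<^sup>2"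
    by (simp add: g_yy_def g_uy_def)
qed

lemma g_conformal:
  assumes "p \<in> Mset Aa" "t_scale n Aa \<xi> (fst p) \<noteq> 0"
  shows "g_uu n Aa 1 \<xi> p = (t_scale n Aa \<xi> (fst p))\<^sup>2 * (mu n Aa \<xi> (fst p))\<^sup>2 / (t_chart n Aa \<xi> (fst p))\<^sup>2"
    and "g_yy n Aa 1 \<xi> p = (t_scale n Aa \<xi> (fst p))\<^sup>2 / (t_chart n Aa \<xi> (fst p))\<^sup>2"
  using assms by (simp_all add: g_uu_eq_mu g_yy_def t_chart_eq_mult power_mult_distrib)

lemma smooth_on_S1_S2_TM:
  assumes mu_nonzero: "\<And>u. u \<in> {0<..<sqrt (Aa 1)} \<Longrightarrow> mu n Aa \<xi> u \<noteq> 0"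
  shows "smooth_on (Mset Aa \<times> UNIV) (\<lambda>(p, q). S1_TM n Aa 1 \<xi> (fst p, snd p, fst q, snd q))"
    and "smooth_on (Mset Aa \<times> UNIV) (\<lambda>(p, q). S2_TM n Aa 1 \<xi> (fst p, snd p, fst q, snd q))"
proof -
  let ?T = "Mset Aa \<times> (UNIV :: (real \<times> real) set)"
  have below: "(fst (fst z))\<^sup>2 < Aa i" if "z \<in> ?T" "i \<in> {1..n}" for z i
    using Mset_below_Aa that by auto
  have pa: "Ck_on k ?T (\<lambda>z. fst (snd z) / (2 * fst (fst z)))" for k
    by (intro Ck_on_intros) (auto simp: Mset_def)
  have nonzero: "xdot n Aa 1 \<xi> ((fst (fst z))\<^sup>2) \<noteq> 0" if "z \<in> ?T" for z
    using that mu_nonzero[of "fst (fst z)"] xdot_sq_eq_mu[of n "fst (fst z)" Aa \<xi>] below[OF that]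
    by (auto simp: Mset_def)
  have "Ck_on k ?T (\<lambda>z. S1F n Aa 1 \<xi> ((fst (fst z))\<^sup>2) (snd (fst z)) (fst (snd z) / (2 * fst (fst z))) (snd (snd z)))"
    "Ck_on k ?T (\<lambda>z. S2F n Aa 1 \<xi> ((fst (fst z))\<^sup>2) (snd (fst z)) (fst (snd z) / (2 * fst (fst z))) (snd (snd z)))"
    for k
    by (rule Ck_on_S1F_S2F; (intro Ck_on_intros pa)?; (simp add: below nonzero)?)+
  then show "smooth_on ?T (\<lambda>(p, q). S1_TM n Aa 1 \<xi> (fst p, snd p, fst q, snd q))"
    and "smooth_on ?T (\<lambda>(p, q). S2_TM n Aa 1 \<xi> (fst p, snd p, fst q, snd q))"
    by (simp_all add: smooth_on_def S1_TM_def S2_TM_def case_prod_unfold)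
qed

lemma smooth_on_t_chart: "smooth_on {0<..<sqrt (Aa 1)} (t_chart n Aa \<xi>)"
  unfolding smooth_on_def t_chart_def
  by (intro allI Ck_on_intros) (auto simp: interval_below_Aa)

lemma smooth_on_conformal_factor: "smooth_on (Mset Aa) (\<lambda>p. (t_scale n Aa \<xi> (fst p))\<^sup>2)"
  unfolding smooth_on_def t_scale_def
  by (intro allI Ck_on_intros) (auto dest: Mset_below_Aa)

lemma smooth_on_inv_t_chart:
  assumes "open V" "bij_betw (t_chart n Aa \<xi>) {0<..<sqrt (Aa 1)} V"
    and mu_nonzero: "\<And>u. u \<in> {0<..<sqrt (Aa 1)} \<Longrightarrow> mu n Aa \<xi> u \<noteq> 0"
  shows "smooth_on V (inv_into {0<..<sqrt (Aa 1)} (t_chart n Aa \<xi>))"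
  unfolding smooth_on_def
proof
  fix k
  have "Ck_on k {0<..<sqrt (Aa 1)} (mu n Aa \<xi>)" for k
    unfolding mu_def by (intro Ck_on_intros) (auto simp: interval_below_Aa)
  then have "Ck_on k {0<..<sqrt (Aa 1)} (\<lambda>u. inverse (mu n Aa \<xi> u))" for k
    using mu_nonzero by (rule Ck_on_inverse)
  moreover have "(t_chart n Aa \<xi> has_real_derivative mu n Aa \<xi> u) (at u)"
    if "u \<in> {0<..<sqrt (Aa 1)}" for u
    using that by (intro has_real_derivative_t_chart) (simp add: interval_below_Aa)
  ultimately show "Ck_on k V (inv_into {0<..<sqrt (Aa 1)} (t_chart n Aa \<xi>))"
    using assms(1,2) mu_nonzero by (intro Ck_on_inv_into) auto
qed

lemma globally_defined_if_chart:
  assumes V: "V = {0<..} \<or> V = {..<0}"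
    and bij: "bij_betw (t_chart n Aa \<xi>) {0<..<sqrt (Aa 1)} V"
    and mu_nonzero: "\<And>u. u \<in> {0<..<sqrt (Aa 1)} \<Longrightarrow> mu n Aa \<xi> u \<noteq> 0"
  shows "globally_defined n Aa 1 \<xi>"
proof -
  have in_interval: "fst p \<in> {0<..<sqrt (Aa 1)}" if "p \<in> Mset Aa" for p
    using that by (auto simp: Mset_def)
  have "t_chart n Aa \<xi> (fst p) \<in> V" if "p \<in> Mset Aa" for p
    using bij_betwE[OF bij] in_interval[OF that] by blast
  then have "t_chart n Aa \<xi> (fst p) \<noteq> 0" if "p \<in> Mset Aa" for p
    using that V by fastforce
  then have t_scale_nonzero: "t_scale n Aa \<xi> (fst p) \<noteq> 0" if "p \<in> Mset Aa" for p
    using that by (auto simp: t_chart_eq_mult)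
  have deriv_t_chart: "deriv (t_chart n Aa \<xi>) (fst p) = mu n Aa \<xi> (fst p)" if "p \<in> Mset Aa" for p
    using in_interval[OF that]
    by (intro DERIV_imp_deriv has_real_derivative_t_chart) (simp add: interval_below_Aa)
  have "open V"
    using V by auto
  have chart: "\<exists>t V \<Phi>. (V = {0<..} \<or> V = {..<0}) \<and>
        bij_betw t {0 <..< sqrt (Aa 1)} V \<and>
        smooth_on {0 <..< sqrt (Aa 1)} t \<and>
        smooth_on V (inv_into {0 <..< sqrt (Aa 1)} t) \<and>
        smooth_on (Mset Aa) \<Phi> \<and> (\<forall>p\<in>Mset Aa. \<Phi> p > 0) \<and>
        (\<forall>p\<in>Mset Aa.
           g_uu n Aa 1 \<xi> p = \<Phi> p * (deriv t (fst p)) ^ 2 / (t (fst p)) ^ 2 \<and>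
           g_uy n Aa 1 \<xi> p = 0 \<and>
           g_yy n Aa 1 \<xi> p = \<Phi> p / (t (fst p)) ^ 2)"
    using V bij smooth_on_t_chart smooth_on_inv_t_chart[OF \<open>open V\<close> bij mu_nonzero]
      smooth_on_conformal_factor t_scale_nonzero g_conformal deriv_t_chart
    by (intro exI[of _ "t_chart n Aa \<xi>"] exI[of _ V] exI[of _ "\<lambda>p. (t_scale n Aa \<xi> (fst p))\<^sup>2"])
       (simp add: g_uy_def)
  show ?thesis
    unfolding globally_defined_def
    using smooth_on_metric metric_positive_definite mu_nonzero in_interval chart
      smooth_on_S1_S2_TM[OF mu_nonzero]
    by blast
qed


lemma chart_sum_ge_first_term:
  assumes "1 \<le> n" "\<And>i. i \<in> {1..n} \<Longrightarrow> 0 \<le> w i" "w 1 = 1" "0 \<le> u" "u < sqrt (Aa 1)"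
  shows "u / (Aa 1 * sqrt (Aa 1 - u\<^sup>2)) \<le> (\<Sum>i\<in>{1..n}. w i * u / (Aa i * sqrt (Aa i - u\<^sup>2)))"
proof -
  have "0 \<le> w i * u / (Aa i * sqrt (Aa i - u\<^sup>2))" if "i \<in> {1..n}" for i
    using assms(2,4) below_Aa[OF assms(4,5) that] that by simp
  then show ?thesis
    using member_le_sum[of 1 "{1..n}" "\<lambda>i. w i * u / (Aa i * sqrt (Aa i - u\<^sup>2))"] assms(1,3) by simp
qed

section \<open>The two sign patterns\<close>

lemma mu_ge_1:
  assumes "\<And>i. i \<in> {1..n} \<Longrightarrow> 0 \<le> w i" "0 \<le> u" "u < sqrt (Aa 1)"
  shows "1 \<le> mu n Aa w u"
proof -
  have "0 \<le> w i / ((Aa i - u\<^sup>2) * sqrt (Aa i - u\<^sup>2))" if "i \<in> {1..n}" for i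
    using assms(1)[OF that] below_Aa[OF assms(2,3) that] by simp
  then have "0 \<le> (\<Sum>i\<in>{1..n}. w i / ((Aa i - u\<^sup>2) * sqrt (Aa i - u\<^sup>2)))"
    by (rule sum_nonneg)
  then show ?thesis
    by (simp add: mu_def)
qed

lemma mu_neg_weights_le:
  assumes "\<And>i. i \<in> {1..n} \<Longrightarrow> 0 \<le> w i" "0 \<le> u" "u < sqrt (Aa 1)"
  shows "mu n Aa (\<lambda>i. - w i) u \<le> 1 - (\<Sum>i\<in>{1..n}. w i / (Aa i * sqrt (Aa i)))"
proof -
  have "(\<Sum>i\<in>{1..n}. w i / (Aa i * sqrt (Aa i)))
        \<le> (\<Sum>i\<in>{1..n}. w i / ((Aa i - u\<^sup>2) * sqrt (Aa i - u\<^sup>2)))"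
    using assms(1) below_Aa[OF assms(2,3)] by (intro sum_mono frac_le_chart_term) auto
  then show ?thesis
    by (simp add: mu_def sum_negf)
qed

lemma globally_defined_pos_weights:
  assumes "1 \<le> n" "\<And>i. i \<in> {1..n} \<Longrightarrow> 0 \<le> w i" "w 1 = 1"
  shows "globally_defined n Aa 1 w"
proof -
  have "bij_betw (t_chart n Aa w) {0<..<sqrt (Aa 1)} {0<..}"
  proof (rule bij_betw_half_line_if_deriv_pos)
    fix u assume u: "0 \<le> u" "u < sqrt (Aa 1)"
    show "(t_chart n Aa w has_real_derivative mu n Aa w u) (at u)"
      using below_Aa[OF u] by (intro has_real_derivative_t_chart) auto
    have "1 \<le> mu n Aa w u"
      using mu_ge_1[of w, OF assms(2) u] .
    then show "0 < mu n Aa w u"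
      by simp
  next
    fix M
    obtain u where u: "u \<in> {0<..<sqrt (Aa 1)}" "M \<le> u / (Aa 1 * sqrt (Aa 1 - u\<^sup>2))"
      using chart_term_unbounded[OF Aa1_pos] by blast
    then have "M \<le> t_chart n Aa w u"
      using chart_sum_ge_first_term[of w u, OF assms] by (simp add: t_chart_def)
    with u show "\<exists>u\<in>{0<..<sqrt (Aa 1)}. M \<le> t_chart n Aa w u"
      by blast
  qed simp
  moreover have "mu n Aa w u \<noteq> 0" if "u \<in> {0<..<sqrt (Aa 1)}" for u
    using mu_ge_1[of w u, OF assms(2)] that by simp
  ultimately show ?thesis
    by (intro globally_defined_if_chart) auto
qed

lemma globally_defined_neg_weights:
  assumes "1 \<le> n" "\<And>i. i \<in> {1..n} \<Longrightarrow> 0 \<le> w i" "w 1 = 1"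
    and large: "1 < (\<Sum>i\<in>{1..n}. w i / (Aa i * sqrt (Aa i)))"
  shows "globally_defined n Aa 1 (\<lambda>i. - w i)"
proof -
  have mu_neg: "mu n Aa (\<lambda>i. - w i) u < 0" if "0 \<le> u" "u < sqrt (Aa 1)" for u
    using mu_neg_weights_le[of w, OF assms(2) that] large by linarith
  have "bij_betw (\<lambda>u. - t_chart n Aa (\<lambda>i. - w i) u) {0<..<sqrt (Aa 1)} {0<..}"
  proof (rule bij_betw_half_line_if_deriv_pos)
    fix u assume u: "0 \<le> u" "u < sqrt (Aa 1)"
    have "(t_chart n Aa (\<lambda>i. - w i) has_real_derivative mu n Aa (\<lambda>i. - w i) u) (at u)"
      using below_Aa[OF u] by (intro has_real_derivative_t_chart) auto
    then show "((\<lambda>u. - t_chart n Aa (\<lambda>i. - w i) u) has_real_derivative - mu n Aa (\<lambda>i. - w i) u) (at u)"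
      by (rule DERIV_minus)
    show "0 < - mu n Aa (\<lambda>i. - w i) u"
      using mu_neg[OF u] by simp
  next
    fix M
    obtain u where u: "u \<in> {0<..<sqrt (Aa 1)}"
      "M + sqrt (Aa 1) \<le> u / (Aa 1 * sqrt (Aa 1 - u\<^sup>2))"
      using chart_term_unbounded[OF Aa1_pos] by blast
    then have "M \<le> - t_chart n Aa (\<lambda>i. - w i) u"
      using chart_sum_ge_first_term[of w u, OF assms(1-3)] by (simp add: t_chart_def sum_negf)
    with u show "\<exists>u\<in>{0<..<sqrt (Aa 1)}. M \<le> - t_chart n Aa (\<lambda>i. - w i) u"
      by blast
  qed simp
  moreover have "bij_betw uminus {0<..} {..<0::real}"
    by (rule bij_betwI[of _ _ _ uminus]) auto
  ultimately have "bij_betw (uminus \<circ> (\<lambda>u. - t_chart n Aa (\<lambda>i. - w i) u)) {0<..<sqrt (Aa 1)} {..<0}"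
    by (rule bij_betw_trans)
  moreover have "mu n Aa (\<lambda>i. - w i) u \<noteq> 0" if "u \<in> {0<..<sqrt (Aa 1)}" for u
    using mu_neg[of u] that by simp
  ultimately show ?thesis
    by (intro globally_defined_if_chart) (auto simp: o_def)
qed

end

lemma powr_three_halves: "0 < x \<Longrightarrow> x powr (3/2) = x * sqrt (x::real)"
  by (simp add: powr_half_sqrt[symmetric] powr_mult_base)

lemma sum_split_first_powr_three_halves:
  fixes Aa \<xi> :: "nat \<Rightarrow> real"
  assumes "1 \<le> n" "\<And>i. i \<in> {1..n} \<Longrightarrow> 0 < Aa i"
  shows "1 / \<bar>Aa 1\<bar> powr (3/2) + (\<Sum>i\<in>{2..n}. \<xi> i / \<bar>Aa i\<bar> powr (3/2))
         = (\<Sum>i\<in>{1..n}. (if i = 1 then 1 else \<xi> i) / (Aa i * sqrt (Aa i)))"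
proof -
  have "(\<Sum>i\<in>{2..n}. \<xi> i / \<bar>Aa i\<bar> powr (3/2)) = (\<Sum>i\<in>{2..n}. \<xi> i / (Aa i * sqrt (Aa i)))"
  proof (rule sum.cong)
    fix i assume "i \<in> {2..n}"
    then have "0 < Aa i"
      using assms(2) by simp
    then show "\<xi> i / \<bar>Aa i\<bar> powr (3/2) = \<xi> i / (Aa i * sqrt (Aa i))"
      by (simp add: powr_three_halves)
  qed simp
  moreover have "0 < Aa 1"
    using assms by simp
  then have "1 / \<bar>Aa 1\<bar> powr (3/2) = 1 / (Aa 1 * sqrt (Aa 1))"
    by (simp add: powr_three_halves)
  ultimately show ?thesis
    using sum.atLeast_Suc_atMost[OF assms(1), of "\<lambda>i. (if i = 1 then 1 else \<xi> i) / (Aa i * sqrt (Aa i))"]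
    by (simp add: numeral_2_eq_2)
qed

theorem proposition29:
  fixes n :: nat and Aa :: "nat \<Rightarrow> real" and \<xi> :: "nat \<Rightarrow> real"
  assumes "n \<ge> 2"
    and "inj_on Aa {1..n}"
    and "0 < Aa 1" and "Aa 1 < 1"
    and "\<forall>i\<in>{2..n}. Aa i > 1"
    and "\<forall>i\<in>{2..n}. \<xi> i > 0"
  shows "(1 / \<bar>Aa 1\<bar> powr (3/2) + (\<Sum>i\<in>{2..n}. \<xi> i / \<bar>Aa i\<bar> powr (3/2)) > 1 \<longrightarrow>
            globally_defined n Aa 1 (\<lambda>i. if i = 1 then -1 else - \<xi> i))
       \<and> globally_defined n Aa 1 (\<lambda>i. if i = 1 then 1 else \<xi> i)"
proof -
  \<comment> \<open>The roots need not be distinct for this argument.\<close>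
  define w where "w = (\<lambda>i. if i = 1 then 1 else \<xi> i)"
  have n: "1 \<le> n"
    using assms(1) by simp
  have split: "i = 1 \<or> i \<in> {2..n}" if "i \<in> {1..n}" for i
    using that by auto
  have Aa_min: "Aa 1 \<le> Aa i" if "i \<in> {1..n}" for i
    using split[OF that] assms(4,5) by fastforce
  have w: "0 \<le> w i" if "i \<in> {1..n}" for i
    using split[OF that] assms(6) by (fastforce simp: w_def)
  have "(\<lambda>i. if i = 1 then -1 else - \<xi> i) = (\<lambda>i. - w i)"
    by (auto simp: w_def)
  then show ?thesis
    using sum_split_first_powr_three_halves[of n Aa \<xi>] n Aa_min assms(3)
      globally_defined_neg_weights[of n Aa w, OF Aa_min assms(3) n w]
      globally_defined_pos_weights[of n Aa w, OF Aa_min assms(3) n w]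
    by (force simp: w_def)
qed

end
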